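(* Let $n\ge 4$. There is no 1-layer transformer with leftmost hard attention, rightmost hard attention, or average hard attention that performs function evaluation for domain $[n]$ in the "consecutive positions, permuted keys" presentation. This holds for any token embedding, position embedding, embedding dimension, MLP layers and unembedding. Here performing function evaluation means that, for every $f:[n]\to[n]$, every permutation $\pi$ of $[n]$ and every $i^*\in[n]$, the transformer outputs $f(i^* )$ on the input sequence $\pi(0),f(\pi(0)),\pi(1),f(\pi(1)),\dots,\pi(n-1),f(\pi(n-1)),i^*$.
   Context: Notation: $[n]=\{0,\dots,n-1\}$. Transformer model (encoder-only, no masking). A transformer consists of three parts. - An input embedding sends position $i$ with token $x_i$ to $\mathbf{w}(x_i)+\mathbf{p}(i)\in\mathbb{R}^d$. - One attention layer (possibly with residual connection) follows, together with any number of position-wise MLP layers. - The output is the index in $[n]$ maximizing $\mathbf{U}\mathbf{Y}[L-1]$, where $\mathbf{Y}[L-1]$ is the final vector at the last position and $\mathbf{U}\in\mathbb{R}^{n\times d}$. Attention computes the scores $s[i,j]=(\mathbf{W}^Q\mathbf{X}[i])\cdot(\mathbf{W}^K\mathbf{X}[j])/\sqrt{d_{hid}}$ and outputs $\sum_j\alpha[i,j]\mathbf{W}^V\mathbf{X}[j]$. Let $M_i$ be the set of $j$ maximizing $s[i,j]$. - Leftmost hard attention: $\alpha[i,j]=1$ iff $j=\min M_i$, and $0$ otherwise. - Rightmost hard attention: $\alpha[i,j]=1$ iff $j=\max M_i$, and $0$ otherwise. - Average hard attention: $\alpha[i,j]=1/|M_i|$ for $j\in M_i$, and $0$ otherwise.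 *)

theory Defs
  imports Complex_Main
begin

text \<open>Vectors in R^k are represented as functions nat => real (only the first k
  entries matter), matrices as functions nat => nat => real with explicit dimensions.\<close>

type_synonym vec = "nat \<Rightarrow> real"
type_synonym mat = "nat \<Rightarrow> nat \<Rightarrow> real"

definition dotp :: "nat \<Rightarrow> vec \<Rightarrow> vec \<Rightarrow> real" where
  "dotp k x y = (\<Sum>j<k. x j * y j)"

definition mulv :: "nat \<Rightarrow> mat \<Rightarrow> vec \<Rightarrow> vec" where
  "mulv k A x = (\<lambda>i. \<Sum>j<k. A i j * x j)"

definition relu :: "real \<Rightarrow> real" where
  "relu t = max 0 t"

text \<open>A position-wise MLP layer R^d -> R^d: (hidden width h, W1 (h x d), b1, W2 (d x h), b2),
  computing x |-> W2 relu(W1 x + b1) + b2.\<close>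
type_synonym mlp_layer = "nat \<times> mat \<times> vec \<times> mat \<times> vec"

definition apply_mlp :: "nat \<Rightarrow> mlp_layer \<Rightarrow> vec \<Rightarrow> vec" where
  "apply_mlp d l x = (case l of (h, W1, b1, W2, b2) \<Rightarrow>
     (\<lambda>i. (\<Sum>j<h. W2 i j * relu ((\<Sum>k<d. W1 j k * x k) + b1 j)) + b2 i))"

datatype attn_kind = Leftmost | Rightmost | Average

record transformer =
  dim :: nat
  dhid :: nat         \<comment> \<open>attention hidden dimension\<close>
  wemb :: "nat \<Rightarrow> vec"
  pemb :: "nat \<Rightarrow> vec"
  WQ :: mat           \<comment> \<open>dhid x d\<close>
  WK :: mat           \<comment> \<open>dhid x d\<close>
  WV :: mat           \<comment> \<open>d x d\<close>
  residual :: bool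
  mlps :: "mlp_layer list"
  Unemb :: mat        \<comment> \<open>n x d\<close>

definition emb :: "transformer \<Rightarrow> nat list \<Rightarrow> nat \<Rightarrow> vec" where
  "emb T xs i = (\<lambda>c. wemb T (xs ! i) c + pemb T i c)"

definition score :: "transformer \<Rightarrow> nat list \<Rightarrow> nat \<Rightarrow> nat \<Rightarrow> real" where
  "score T xs i j =
     dotp (dhid T) (mulv (dim T) (WQ T) (emb T xs i)) (mulv (dim T) (WK T) (emb T xs j))
     / sqrt (real (dhid T))"

definition maxset :: "transformer \<Rightarrow> nat list \<Rightarrow> nat \<Rightarrow> nat set" where
  "maxset T xs i = {j. j < length xs \<and> (\<forall>j'<length xs. score T xs i j' \<le> score T xs i j)}"

definition attn_out :: "attn_kind \<Rightarrow> transformer \<Rightarrow> nat list \<Rightarrow> nat \<Rightarrow> vec" where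
  "attn_out a T xs i =
     (let M = maxset T xs i; v = (\<lambda>j. mulv (dim T) (WV T) (emb T xs j)) in
      case a of
        Leftmost \<Rightarrow> v (Min M)
      | Rightmost \<Rightarrow> v (Max M)
      | Average \<Rightarrow> (\<lambda>c. (\<Sum>j\<in>M. v j c) / real (card M)))"

definition final_vec :: "attn_kind \<Rightarrow> transformer \<Rightarrow> nat list \<Rightarrow> vec" where
  "final_vec a T xs =
     (let i = length xs - 1;
          y0 = (\<lambda>c. (if residual T then emb T xs i c else 0) + attn_out a T xs i c)
      in foldl (\<lambda>y l. apply_mlp (dim T) l y) y0 (mlps T))"

definition outputs :: "attn_kind \<Rightarrow> nat \<Rightarrow> transformer \<Rightarrow> nat list \<Rightarrow> nat \<Rightarrow> bool" where
  "outputs a n T xs y =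
     (let z = mulv (dim T) (Unemb T) (final_vec a T xs) in
      y < n \<and> (\<forall>k<n. k \<noteq> y \<longrightarrow> z k < z y))"

definition fe_input :: "nat \<Rightarrow> (nat \<Rightarrow> nat) \<Rightarrow> (nat \<Rightarrow> nat) \<Rightarrow> nat \<Rightarrow> nat list" where
  "fe_input n f \<pi> istar = concat (map (\<lambda>k. [\<pi> k, f (\<pi> k)]) [0..<n]) @ [istar]"

definition performs_fe :: "attn_kind \<Rightarrow> nat \<Rightarrow> transformer \<Rightarrow> bool" where
  "performs_fe a n T =
     (\<forall>f \<pi> istar. (\<forall>x<n. f x < n) \<longrightarrow> bij_betw \<pi> {..<n} {..<n} \<longrightarrow> istar < n \<longrightarrow>
        outputs a n T (fe_input n f \<pi> istar) (f istar))"

end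

theory Submission
  imports Defs "HOL-Combinatorics.Transposition"
begin

(* Fix the query token s at the last position 2n. Its query vector does not depend on f or \<pi>, so
  the attention score of position j splits as tok(x_j) + pos(j). If a value slot loses the attention
  contest both when it holds u and when it holds u' \<noteq> u, then switching f(s) between u and u' is
  invisible to the transformer, although it changes the answer. Filling the other value slots with a
  maximiser of tok, this forces pos to be constant on the value slots, and then at most one value in
  [n] can have tok below the maximum, so tok is not injective once n \<ge> 3. On the other hand, if
  tok(u) = tok(u') for u \<noteq> u', swapping the values u and u' of two value slots changes the answer,
  but no kind of hard attention notices it when tied copies of u sit in value slots on both sides. *)

lemma ex_arg_max_lessThan:
  fixes g :: "nat \<Rightarrow> 'a::linorder"
  assumes "0 < n"
  shows "\<exists>t<n. \<forall>u<n. g u \<le> g t"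
proof -
  have "Max (g ` {..<n}) \<in> g ` {..<n}"
    using assms by (intro Max_in) auto
  then obtain t where "t < n" "g t = Max (g ` {..<n})"
    by auto
  then show ?thesis
    by (intro exI[of _ t]) auto
qed

definition qk_score :: "transformer \<Rightarrow> vec \<Rightarrow> vec \<Rightarrow> real" where
  "qk_score T x y =
     dotp (dhid T) (mulv (dim T) (WQ T) x) (mulv (dim T) (WK T) y) / sqrt (real (dhid T))"

lemma mulv_add: "mulv k A (\<lambda>c. x c + y c) = (\<lambda>i. mulv k A x i + mulv k A y i)"
  by (simp add: mulv_def distrib_left sum.distrib)

lemma qk_score_add_right: "qk_score T x (\<lambda>c. y c + z c) = qk_score T x y + qk_score T x z"
  by (simp add: qk_score_def mulv_add dotp_def distrib_left sum.distrib add_divide_distrib)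

lemma score_eq_qk_score:
  "score T xs i j = qk_score T (emb T xs i) (wemb T (xs ! j)) + qk_score T (emb T xs i) (pemb T j)"
  unfolding score_def qk_score_def[symmetric] emb_def[of T xs j] by (rule qk_score_add_right)

lemma mulv_emb:
  "mulv k W (emb T xs j) = (\<lambda>c. mulv k W (wemb T (xs ! j)) c + mulv k W (pemb T j) c)"
  by (simp add: emb_def mulv_add)

lemma finite_maxset: "finite (maxset T xs i)"
  by (rule finite_subset[of _ "{..<length xs}"]) (auto simp: maxset_def)

lemma maxset_nonempty:
  assumes "xs \<noteq> []"
  shows "maxset T xs i \<noteq> {}"
proof -
  obtain j where "j < length xs" "\<forall>j'<length xs. score T xs i j' \<le> score T xs i j"
    using ex_arg_max_lessThan[of "length xs" "score T xs i"] assms by auto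
  then show ?thesis
    by (auto simp: maxset_def)
qed

lemma maxset_cong:
  assumes "length xs' = length xs" "\<forall>j<length xs. score T xs' i j = score T xs i j"
  shows "maxset T xs' i = maxset T xs i"
  using assms by (auto simp: maxset_def)

lemma maxset_dominated:
  assumes "q < length xs" "score T xs i p < score T xs i q"
  shows "maxset T xs i =
    {j. j < length xs \<and> j \<noteq> p \<and>
        (\<forall>j'<length xs. j' \<noteq> p \<longrightarrow> score T xs i j' \<le> score T xs i j)}"
proof -
  have "score T xs i p < score T xs i j"
    if "\<forall>j'<length xs. j' \<noteq> p \<longrightarrow> score T xs i j' \<le> score T xs i j" for j
    using assms that by (cases "q = p") (auto intro: less_le_trans)
  then show ?thesis
    using assms by (auto simp: maxset_def) (metis less_le_not_le)
qed

lemma attn_out_cong: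
  assumes "xs \<noteq> []" "maxset T xs' i = maxset T xs i"
    and "\<forall>j\<in>maxset T xs i. xs' ! j = xs ! j"
  shows "attn_out a T xs' i = attn_out a T xs i"
proof -
  let ?M = "maxset T xs i"
  have emb: "emb T xs' j = emb T xs j" if "j \<in> ?M" for j
    using assms(3) that by (simp add: emb_def)
  have "Min ?M \<in> ?M" "Max ?M \<in> ?M"
    using finite_maxset maxset_nonempty[OF assms(1)] by auto
  then show ?thesis
    using assms(2) emb by (cases a) (simp_all add: attn_out_def)
qed

lemma attn_out_update_dominated:
  assumes "q < length xs" "i \<noteq> p"
    and "score T xs i p < score T xs i q" "score T (xs[p := x]) i p < score T (xs[p := x]) i q"
  shows "attn_out a T (xs[p := x]) i = attn_out a T xs i"
proof (rule attn_out_cong)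
  have "score T (xs[p := x]) i j = score T xs i j" if "j \<noteq> p" for j
    using assms(2) that by (simp add: score_def emb_def)
  then show "maxset T (xs[p := x]) i = maxset T xs i"
    using assms by (auto simp: maxset_dominated)
  show "\<forall>j\<in>maxset T xs i. xs[p := x] ! j = xs ! j"
    using assms by (simp add: maxset_dominated)
qed (use assms(1) in auto)

lemma nth_swap:
  assumes "p < length xs" "q < length xs" "j < length xs"
  shows "xs[p := xs ! q, q := xs ! p] ! j = xs ! transpose p q j"
  using assms by (auto simp: nth_list_update transpose_def)

lemma sum_nth_swap:
  assumes "M \<subseteq> {..<length xs}" "p \<in> M" "q \<in> M"
  shows "(\<Sum>j\<in>M. g (xs[p := xs ! q, q := xs ! p] ! j)) = (\<Sum>j\<in>M. g (xs ! j))"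
proof -
  have "xs[p := xs ! q, q := xs ! p] ! j = xs ! transpose p q j" if "j \<in> M" for j
    using assms that by (intro nth_swap) auto
  then have "(\<Sum>j\<in>M. g (xs[p := xs ! q, q := xs ! p] ! j))
      = (\<Sum>j\<in>M. g (xs ! transpose p q j))"
    by simp
  also have "\<dots> = (\<Sum>j\<in>M. g (xs ! j))"
    using assms(2,3) by (intro sum.reindex_bij_betw) simp
  finally show ?thesis .
qed

lemma attn_out_swap_tied:
  fixes xs :: "nat list" and p q :: nat
  defines "xs' \<equiv> xs[p := xs ! q, q := xs ! p]"
  assumes pos: "l < p" "p < q" "q < r" "r < length xs"
    and tied: "score T xs i l = score T xs i p" "score T xs i q = score T xs i p"
      "score T xs i r = score T xs i p"
    and scores: "\<forall>j<length xs. score T xs' i j = score T xs i j"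
  shows "attn_out a T xs' i = attn_out a T xs i"
proof -
  let ?M = "maxset T xs i"
  have M: "maxset T xs' i = ?M"
    using scores by (intro maxset_cong) (simp_all add: xs'_def)
  have sub: "?M \<subseteq> {..<length xs}"
    by (auto simp: maxset_def)
  have tied_in: "l \<in> ?M \<longleftrightarrow> p \<in> ?M" "q \<in> ?M \<longleftrightarrow> p \<in> ?M" "r \<in> ?M \<longleftrightarrow> p \<in> ?M"
    using pos tied by (auto simp: maxset_def)
  have off: "xs' ! j = xs ! j" if "j \<noteq> p" "j \<noteq> q" for j
    using that by (simp add: xs'_def)
  show ?thesis
  proof (cases "p \<in> ?M")
    case False
    then show ?thesis
      using pos tied_in by (intro attn_out_cong M) (auto intro!: off)
  next
    case True
    then have "Min ?M \<le> l" "r \<le> Max ?M"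
      using tied_in finite_maxset by auto
    moreover have "Min ?M \<in> ?M" "Max ?M \<in> ?M"
      using True finite_maxset[of T xs i] by (auto intro!: Min_in Max_in)
    ultimately have ends:
      "emb T xs' (Min ?M) = emb T xs (Min ?M)" "emb T xs' (Max ?M) = emb T xs (Max ?M)"
      using pos off by (auto simp: emb_def)
    let ?w = "\<lambda>t c. mulv (dim T) (WV T) (wemb T t) c"
    have "(\<Sum>j\<in>?M. ?w (xs' ! j) c) = (\<Sum>j\<in>?M. ?w (xs ! j) c)" for c
      unfolding xs'_def using sub True tied_in by (intro sum_nth_swap) auto
    then have "(\<Sum>j\<in>?M. mulv (dim T) (WV T) (emb T xs' j) c)
        = (\<Sum>j\<in>?M. mulv (dim T) (WV T) (emb T xs j) c)" for c
      by (simp add: mulv_emb sum.distrib)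
    then show ?thesis
      using M ends by (cases a) (simp_all add: attn_out_def)
  qed
qed

lemma final_vec_cong:
  assumes "length xs' = length xs" "xs' ! (length xs - 1) = xs ! (length xs - 1)"
    and "attn_out a T xs' (length xs - 1) = attn_out a T xs (length xs - 1)"
  shows "final_vec a T xs' = final_vec a T xs"
proof -
  have "emb T xs' (length xs - 1) = emb T xs (length xs - 1)"
    using assms(2) by (simp add: emb_def)
  with assms(3) show ?thesis
    unfolding final_vec_def Let_def assms(1) by (simp only:)
qed

lemma outputs_unique:
  assumes "outputs a n T xs y" "outputs a n T xs' y'" "final_vec a T xs' = final_vec a T xs"
  shows "y' = y"
  using assms unfolding outputs_def Let_def by (metis less_asym)

lemma length_concat_pairs: "length (concat (map (\<lambda>k. [g k, h k]) [0..<m])) = 2 * m"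
  by (induction m) auto

lemma nth_concat_pairs:
  assumes "j < 2 * m"
  shows "concat (map (\<lambda>k. [g k, h k]) [0..<m]) ! j =
    (if even j then g (j div 2) else h (j div 2))"
  using assms
proof (induction m)
  case (Suc m)
  show ?case
  proof (cases "j < 2 * m")
    case True
    then show ?thesis using Suc.IH by (simp add: nth_append length_concat_pairs)
  next
    case False
    then have "j = 2 * m \<or> j = Suc (2 * m)" using Suc.prems by auto
    then show ?thesis by (auto simp: nth_append length_concat_pairs)
  qed
qed simp

lemma length_fe_input [simp]: "length (fe_input n f \<pi> s) = Suc (2 * n)"
  by (simp add: fe_input_def length_concat_pairs)

lemma fe_input_nth:
  assumes "j \<le> 2 * n"
  shows "fe_input n f \<pi> s ! j =
    (if j = 2 * n then s else if even j then \<pi> (j div 2) else f (\<pi> (j div 2)))"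
  using assms by (auto simp: fe_input_def nth_append nth_concat_pairs length_concat_pairs)

lemma fe_input_fun_upd:
  assumes "inj_on \<pi> {..<n}" "k < n"
  shows "fe_input n (f(\<pi> k := v)) \<pi> s = (fe_input n f \<pi> s)[Suc (2 * k) := v]"
proof (rule nth_equalityI)
  fix j assume "j < length (fe_input n (f(\<pi> k := v)) \<pi> s)"
  then have "j \<le> 2 * n" by simp
  moreover have "\<pi> (j div 2) \<noteq> \<pi> k" if "j < 2 * n" "j \<noteq> Suc (2 * k)" "odd j"
    using assms that by (auto dest: inj_onD)
  ultimately show "fe_input n (f(\<pi> k := v)) \<pi> s ! j =
      (fe_input n f \<pi> s)[Suc (2 * k) := v] ! j"
    using assms(2) by (auto simp: fe_input_nth nth_list_update)
qed simp

definition fe_query :: "transformer \<Rightarrow> nat \<Rightarrow> nat \<Rightarrow> vec" where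
  "fe_query T n s = (\<lambda>c. wemb T s c + pemb T (2 * n) c)"

definition tok_score :: "transformer \<Rightarrow> nat \<Rightarrow> nat \<Rightarrow> nat \<Rightarrow> real" where
  "tok_score T n s t = qk_score T (fe_query T n s) (wemb T t)"

definition pos_score :: "transformer \<Rightarrow> nat \<Rightarrow> nat \<Rightarrow> nat \<Rightarrow> real" where
  "pos_score T n s j = qk_score T (fe_query T n s) (pemb T j)"

lemma score_fe_input:
  "score T (fe_input n f \<pi> s) (2 * n) j =
    tok_score T n s (fe_input n f \<pi> s ! j) + pos_score T n s j"
  by (simp add: score_eq_qk_score tok_score_def pos_score_def fe_query_def emb_def fe_input_nth)

lemma performs_fe_output_determined:
  assumes "performs_fe a n T" "bij_betw \<pi> {..<n} {..<n}" "s < n"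
    and "\<forall>x<n. f x < n" "\<forall>x<n. f' x < n"
    and "final_vec a T (fe_input n f' \<pi> s) = final_vec a T (fe_input n f \<pi> s)"
  shows "f' s = f s"
  using assms outputs_unique unfolding performs_fe_def by blast

lemma performs_fe_value_attended:
  assumes fe: "performs_fe a n T"
    and "s < n" "k < n" "k' < n" "k \<noteq> k'" "t < n" "u < n" "u' < n" "u \<noteq> u'"
  shows "tok_score T n s t + pos_score T n s (Suc (2 * k'))
    \<le> max (tok_score T n s u) (tok_score T n s u') + pos_score T n s (Suc (2 * k))"
proof (rule ccontr)
  assume "\<not> ?thesis"
  then have dominated: "tok_score T n s v + pos_score T n s (Suc (2 * k))
      < tok_score T n s t + pos_score T n s (Suc (2 * k'))" if "v \<in> {u, u'}" for v
    using that by auto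
  define \<pi> where "\<pi> = transpose s k"
  define g where "g = (\<lambda>_ :: nat. t)"
  define xs where "xs = fe_input n (g(s := u)) \<pi> s"
  have bij: "bij_betw \<pi> {..<n} {..<n}"
    using assms by (simp add: \<pi>_def)
  have "\<pi> k = s" "\<pi> k' \<noteq> s"
    using assms by (auto simp: \<pi>_def transpose_def)
  then have upd: "fe_input n (g(s := u')) \<pi> s = xs[Suc (2 * k) := u']"
    using bij fe_input_fun_upd[of \<pi> n k "g(s := u)" u' s] assms(3)
    by (simp add: xs_def bij_betw_def)
  have tokens: "xs ! Suc (2 * k) = u" "xs ! Suc (2 * k') = t"
    "xs[Suc (2 * k) := u'] ! Suc (2 * k) = u'" "xs[Suc (2 * k) := u'] ! Suc (2 * k') = t"
    using assms \<open>\<pi> k = s\<close> \<open>\<pi> k' \<noteq> s\<close> by (simp_all add: xs_def g_def fe_input_nth)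
  have "attn_out a T (xs[Suc (2 * k) := u']) (2 * n) = attn_out a T xs (2 * n)"
  proof (rule attn_out_update_dominated)
    show "score T xs (2 * n) (Suc (2 * k)) < score T xs (2 * n) (Suc (2 * k'))"
      using dominated tokens unfolding xs_def score_fe_input by (simp add: xs_def)
    show "score T (xs[Suc (2 * k) := u']) (2 * n) (Suc (2 * k))
        < score T (xs[Suc (2 * k) := u']) (2 * n) (Suc (2 * k'))"
      using dominated tokens unfolding upd[symmetric] score_fe_input by (simp add: upd)
  qed (use assms in \<open>simp_all add: xs_def\<close>)
  then have "final_vec a T (xs[Suc (2 * k) := u']) = final_vec a T xs"
    using assms(3) by (intro final_vec_cong) (simp_all add: xs_def)
  then have "final_vec a T (fe_input n (g(s := u')) \<pi> s) =
      final_vec a T (fe_input n (g(s := u)) \<pi> s)"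
    unfolding upd xs_def[symmetric] .
  then have "(g(s := u')) s = (g(s := u)) s"
    using assms
    by (intro performs_fe_output_determined[OF fe bij, where f = "g(s := u)" and f' = "g(s := u')"])
      (auto simp: g_def)
  with \<open>u \<noteq> u'\<close> show False
    by simp
qed

lemma performs_fe_pos_score_odd_eq:
  assumes fe: "performs_fe a n T" and "2 \<le> n" "s < n" "k < n" "k' < n"
  shows "pos_score T n s (Suc (2 * k)) = pos_score T n s (Suc (2 * k'))"
proof -
  obtain t where t: "t < n" "\<forall>u<n. tok_score T n s u \<le> tok_score T n s t"
    using ex_arg_max_lessThan assms(2) by (metis less_le_trans zero_less_numeral)
  have "pos_score T n s (Suc (2 * j')) \<le> pos_score T n s (Suc (2 * j))"
    if "j < n" "j' < n" for j j'
  proof (cases "j = j'")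
    case False
    have "max (tok_score T n s 0) (tok_score T n s 1) \<le> tok_score T n s t"
      using t assms(2) by simp
    moreover have "tok_score T n s t + pos_score T n s (Suc (2 * j'))
        \<le> max (tok_score T n s 0) (tok_score T n s 1) + pos_score T n s (Suc (2 * j))"
      using performs_fe_value_attended[OF fe \<open>s < n\<close> that False t(1), of 0 1] assms(2)
      by simp
    ultimately show ?thesis
      by linarith
  qed simp
  then show ?thesis
    using assms(4,5) by (simp add: order.antisym)
qed

lemma performs_fe_tok_score_not_inj:
  assumes fe: "performs_fe a n T" and "3 \<le> n" "s < n"
  shows "\<not> inj_on (tok_score T n s) {..<n}"
proof
  assume inj: "inj_on (tok_score T n s) {..<n}"
  obtain t where t: "t < n" "\<forall>u<n. tok_score T n s u \<le> tok_score T n s t"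
    using ex_arg_max_lessThan assms(3) by (metis gr_zeroI not_less0)
  define u where "u = (if t = 0 then 1 else 0 :: nat)"
  define u' where "u' = (if t = 2 then 1 else 2 :: nat)"
  have "u < n" "u' < n" "u \<noteq> u'" "u \<noteq> t" "u' \<noteq> t"
    using assms(2) by (auto simp: u_def u'_def)
  then have "tok_score T n s v < tok_score T n s t" if "v \<in> {u, u'}" for v
    using that t inj by (auto simp: order.order_iff_strict dest: inj_onD)
  then have "max (tok_score T n s u) (tok_score T n s u') < tok_score T n s t"
    by simp
  moreover have "pos_score T n s 1 = pos_score T n s 3"
    using performs_fe_pos_score_odd_eq[OF fe _ \<open>s < n\<close>, of 0 1] assms(2) by simp
  moreover have "tok_score T n s t + pos_score T n s 3
      \<le> max (tok_score T n s u) (tok_score T n s u') + pos_score T n s 1"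
    using performs_fe_value_attended[OF fe \<open>s < n\<close>, of 0 1 t u u'] assms(2)
      \<open>u < n\<close> \<open>u' < n\<close> \<open>u \<noteq> u'\<close> t(1) by simp
  ultimately show False
    by linarith
qed

(* With query 1 and the identity permutation, the values f 1 and f 2 sit at positions 3 and 5,
  flanked by the copies f 0 = f (n - 1) = u at positions 1 and 2n - 1. *)
lemma performs_fe_tok_score_inj:
  assumes fe: "performs_fe a n T" and "4 \<le> n"
  shows "inj_on (tok_score T n 1) {..<n}"
proof (rule inj_onI, rule ccontr)
  fix u u' assume "u \<in> {..<n}" "u' \<in> {..<n}" "u \<noteq> u'"
    and tok_eq: "tok_score T n 1 u = tok_score T n 1 u'"
  define g where "g = (\<lambda>_ :: nat. u)"
  define xs where "xs = fe_input n (g(2 := u')) id 1"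
  define xs' where "xs' = xs[3 := xs ! 5, 5 := xs ! 3]"
  have last_value: "2 * n - 1 = Suc (2 * (n - 1))"
    using assms(2) by simp
  have tokens: "xs ! 1 = u" "xs ! 3 = u" "xs ! 5 = u'" "xs ! (2 * n - 1) = u"
    using assms unfolding last_value by (auto simp: xs_def g_def fe_input_nth)
  have swapped: "fe_input n (g(1 := u')) id 1 = xs'"
    using assms by (intro nth_equalityI)
      (auto simp: xs'_def xs_def g_def fe_input_nth nth_list_update elim!: oddE)
  have pos: "pos_score T n 1 (Suc (2 * k)) = pos_score T n 1 1" if "k < n" for k
    using performs_fe_pos_score_odd_eq[OF fe _ _ that, of 1 0] assms(2) by simp
  have tied: "pos_score T n 1 3 = pos_score T n 1 1" "pos_score T n 1 5 = pos_score T n 1 1"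
    "pos_score T n 1 (2 * n - 1) = pos_score T n 1 1"
    using pos[of 1] pos[of 2] pos[of "n - 1"] assms(2) unfolding last_value by simp_all
  have "length xs = Suc (2 * n)"
    by (simp add: xs_def)
  then have "tok_score T n 1 (xs' ! j) = tok_score T n 1 (xs ! j)" for j
    using tokens tok_eq assms(2) by (simp add: xs'_def nth_list_update)
  then have "\<forall>j<length xs. score T xs' (2 * n) j = score T xs (2 * n) j"
    unfolding swapped[symmetric] xs_def score_fe_input by (simp add: xs_def)
  then have "attn_out a T xs' (2 * n) = attn_out a T xs (2 * n)"
    unfolding xs'_def using assms(2) tokens tied tok_eq
    by (intro attn_out_swap_tied[where l = 1 and r = "2 * n - 1"])
      (simp_all add: xs_def score_fe_input)
  then have "final_vec a T xs' = final_vec a T xs"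
    using assms(2) by (intro final_vec_cong) (simp_all add: xs'_def xs_def)
  then have "(g(1 := u')) 1 = (g(2 := u')) 1"
    using assms \<open>u \<in> {..<n}\<close> \<open>u' \<in> {..<n}\<close> unfolding swapped[symmetric] xs_def
    by (intro performs_fe_output_determined[OF fe, where f = "g(2 := u')" and f' = "g(1 := u')"])
      (auto simp: g_def)
  with \<open>u \<noteq> u'\<close> show False
    by (simp add: g_def)
qed

theorem theorem6:
  fixes n :: nat and a :: attn_kind
  assumes "n \<ge> 4"
  shows "\<not> (\<exists>T. performs_fe a n T)"
proof
  assume "\<exists>T. performs_fe a n T"
  then obtain T where fe: "performs_fe a n T" ..
  have "inj_on (tok_score T n 1) {..<n}"
    using performs_fe_tok_score_inj[OF fe assms] .
  moreover have "\<not> inj_on (tok_score T n 1) {..<n}"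
    using performs_fe_tok_score_not_inj[OF fe] assms by simp
  ultimately show False
    by contradiction
qed

end
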